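(* Let $H$ and $J$ be atomic hypergraphs on the same finite carrier $C$. Then $H$ and $J$ are cognate if and only if $H$ and $J$ have exactly the same constructions, i.e. $\mathcal C(H)=\mathcal C(J)$.
   Context: A hypergraph is a finite set $H$ of nonempty subsets of some finite set; its carrier is $\bigcup H$. For a family $F$ and a set $Y$, $F_Y=\{X\in F\mid X\subseteq Y\}$. A hypergraph partition of $H$ is a partition $\{H_1,\dots,H_n\}$ ($n\ge0$) of the set $H$ such that $\{\bigcup H_1,\dots,\bigcup H_n\}$ is a partition of $\bigcup H$; $H$ is connected if it has exactly one hypergraph partition; the finest hypergraph partition is the unique one with all blocks connected. $H$ is atomic if $\{x\}\in H$ for every $x\in\bigcup H$. Constructions of an atomic hypergraph $H$ are defined by induction on $|\bigcup H|$: (0) $\emptyset$ is the only construction of the empty hypergraph; (1) if $|\bigcup H|\ge1$, $H$ is connected, $x\in\bigcup H$ and $K$ is a construction of $H_{\bigcup H\setminus\{x\}}$, then $K\cup\{\bigcup H\}$ is a construction of $H$; (2) if $H$ is not connected with finest hypergraph partition $\{H_1,\dots,H_n\}$, $n\ge2$, and $K_i$ is a construction of $H_i$ for each $i$, then $K_1\cup\dots\cup K_n$ is a construction of $H$. $\mathcal C(H)$ denotes the set of constructions. $Y\subseteq\bigcup H$ is dispensable in $H$ when $H_Y\setminus\{Y\}$ is a connected hypergraph with carrier $Y$; $H\cup\{Y\}$ enhances $H$ when $Y$ is dispensable in $H$ and $Y\notin H$; two hypergraphs on the same carrier are cognate when related by the reflexive, symmetric, transitive closure of enhancement. *)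

theory Defs
  imports Main "HOL-Library.Disjoint_Sets"
begin

definition hypergraph :: "'a set set \<Rightarrow> bool" where
  "hypergraph H \<longleftrightarrow> finite H \<and> finite (\<Union>H) \<and> (\<forall>X\<in>H. X \<noteq> {})"

definition restr :: "'a set set \<Rightarrow> 'a set \<Rightarrow> 'a set set" where
  "restr F Y = {X \<in> F. X \<subseteq> Y}"

text \<open>A hypergraph partition: a partition of the set H into blocks H_i such that the
  carriers of the blocks (indexed by the blocks, hence injectivity) partition the carrier.\<close>
definition hyp_partition :: "'a set set \<Rightarrow> 'a set set set \<Rightarrow> bool" where
  "hyp_partition H P \<longleftrightarrow> partition_on H P \<and> inj_on Union P
      \<and> partition_on (\<Union>H) (Union ` P)"

definition hconnected :: "'a set set \<Rightarrow> bool" where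
  "hconnected H \<longleftrightarrow> (\<exists>!P. hyp_partition H P)"

definition finest_partition :: "'a set set \<Rightarrow> 'a set set set \<Rightarrow> bool" where
  "finest_partition H P \<longleftrightarrow> hyp_partition H P \<and> (\<forall>B\<in>P. hconnected B)"

definition atomic :: "'a set set \<Rightarrow> bool" where
  "atomic H \<longleftrightarrow> (\<forall>x\<in>\<Union>H. {x} \<in> H)"

inductive is_construction :: "'a set set \<Rightarrow> 'a set set \<Rightarrow> bool" where
  empty: "is_construction {} {}"
| conn: "\<Union>H \<noteq> {} \<Longrightarrow> hconnected H \<Longrightarrow> x \<in> \<Union>H
     \<Longrightarrow> is_construction (restr H (\<Union>H - {x})) K
     \<Longrightarrow> is_construction H (K \<union> {\<Union>H})"
| disconn: "\<not> hconnected H \<Longrightarrow> finest_partition H P \<Longrightarrow> card P \<ge> 2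
     \<Longrightarrow> (\<forall>B\<in>P. is_construction B (K B))
     \<Longrightarrow> is_construction H (\<Union>B\<in>P. K B)"

definition constructions :: "'a set set \<Rightarrow> 'a set set set" where
  "constructions H = {K. is_construction H K}"

definition dispensable :: "'a set set \<Rightarrow> 'a set \<Rightarrow> bool" where
  "dispensable H Y \<longleftrightarrow> Y \<subseteq> \<Union>H \<and> hconnected (restr H Y - {Y})
      \<and> \<Union>(restr H Y - {Y}) = Y"

definition enhances :: "'a set set \<Rightarrow> 'a set set \<Rightarrow> bool" where
  "enhances H' H \<longleftrightarrow> (\<exists>Y. Y \<noteq> {} \<and> dispensable H Y \<and> Y \<notin> H \<and> H' = H \<union> {Y})"

definition cognate :: "'a set set \<Rightarrow> 'a set set \<Rightarrow> bool" where
  "cognate H J \<longleftrightarrow> equivclp enhances H J"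

end

theory Submission
  imports Defs
begin

(* Call a nonempty set Y a connected set of H when the restriction H_Y is a
   connected hypergraph whose carrier is exactly Y; write connected_sets H for the family of
   these sets.  The theorem follows from four facts about a finite hypergraph H:
   (1) enhancing H does not change connected_sets H, so cognate hypergraphs have the same
       connected sets;
   (2) H is cognate to connected_sets H itself, obtained by adding the missing connected sets
       one at a time, each of which is dispensable at the moment it is added;
   (3) every construction of H consists of connected sets, and every connected set occurs
       in some construction, so the union of all constructions is connected_sets H;
   (4) the constructions of H depend only on connected_sets H (by induction on constructions,
       since connectivity, restrictions and finest partitions are all determined by it).
   Then (1) and (4) give one direction and (3) and (2) the other. *)

text \<open>Hypergraphs have nonempty edges; most lemmas below need only this part of the notion.\<close>
definition nonempty_members :: "'a set set \<Rightarrow> bool" where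
  "nonempty_members H \<longleftrightarrow> (\<forall>X\<in>H. X \<noteq> {})"

lemma restr_iff: "X \<in> restr G Z \<longleftrightarrow> X \<in> G \<and> X \<subseteq> Z"
  unfolding restr_def by simp

lemma restr_restr: "Y \<subseteq> Z \<Longrightarrow> restr (restr G Z) Y = restr G Y"
  unfolding restr_def by auto

lemma restr_subset: "restr G Z \<subseteq> G"
  unfolding restr_def by auto

lemma restr_carrier_subset: "\<Union>(restr G Z) \<subseteq> Z"
  unfolding restr_def by auto

lemma restr_whole_carrier: "restr G (\<Union>G) = G"
  unfolding restr_def by auto

lemma nonempty_members_subset: "nonempty_members G \<Longrightarrow> H \<subseteq> G \<Longrightarrow> nonempty_members H"
  unfolding nonempty_members_def by auto

lemma nonempty_members_restr: "nonempty_members G \<Longrightarrow> nonempty_members (restr G Z)"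
  using nonempty_members_subset restr_subset by blast

lemma empty_carrier: "nonempty_members G \<Longrightarrow> \<Union>G = {} \<Longrightarrow> G = {}"
  unfolding nonempty_members_def by auto

section \<open>Hypergraph partitions\<close>

lemma hp_block_subset: "hyp_partition G P \<Longrightarrow> B \<in> P \<Longrightarrow> B \<subseteq> G"
  unfolding hyp_partition_def partition_on_def by blast

lemma hp_covers: "hyp_partition G P \<Longrightarrow> X \<in> G \<Longrightarrow> \<exists>B\<in>P. X \<in> B"
  unfolding hyp_partition_def partition_on_def by blast

lemma hp_block_nonempty: "hyp_partition G P \<Longrightarrow> B \<in> P \<Longrightarrow> \<Union>B \<noteq> {}"
  unfolding hyp_partition_def partition_on_def by blast

lemma hp_carrier: "hyp_partition G P \<Longrightarrow> \<Union>G = (\<Union>B\<in>P. \<Union>B)"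
  unfolding hyp_partition_def partition_on_def by blast

lemma hp_carrier_inj: "hyp_partition G P \<Longrightarrow> inj_on Union P"
  unfolding hyp_partition_def by blast

lemma hp_disjoint:
  assumes "hyp_partition G P" "B1 \<in> P" "B2 \<in> P" "B1 \<noteq> B2"
  shows "\<Union>B1 \<inter> \<Union>B2 = {}"
proof -
  have "\<Union>B1 \<noteq> \<Union>B2" using assms unfolding hyp_partition_def inj_on_def by blast
  moreover have "disjoint (Union ` P)"
    using assms(1) unfolding hyp_partition_def partition_on_def by blast
  ultimately show ?thesis using assms(2,3) by (meson disjointD imageI)
qed

text \<open>A block is recovered from its carrier, since the other blocks live on disjoint carriers.\<close>
lemma hp_block_restr:
  assumes ne: "nonempty_members G" and hp: "hyp_partition G P" and B: "B \<in> P"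
  shows "restr G (\<Union>B) = B"
proof
  show "B \<subseteq> restr G (\<Union>B)" using hp_block_subset[OF hp B] unfolding restr_def by blast
  show "restr G (\<Union>B) \<subseteq> B"
  proof
    fix X assume "X \<in> restr G (\<Union>B)"
    then have XG: "X \<in> G" and XB: "X \<subseteq> \<Union>B" by (simp_all add: restr_iff)
    obtain B' where B': "B' \<in> P" "X \<in> B'" using hp_covers[OF hp XG] by blast
    have "X \<noteq> {}" using ne XG unfolding nonempty_members_def by blast
    then show "X \<in> B" using hp_disjoint[OF hp B'(1) B] B' XB by blast
  qed
qed

lemma hp_empty_iff: "hyp_partition {} P \<longleftrightarrow> P = {}"
  unfolding hyp_partition_def by (auto simp: partition_on_empty)

lemma hp_trivial: "nonempty_members G \<Longrightarrow> G \<noteq> {} \<Longrightarrow> hyp_partition G {G}"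
  unfolding hyp_partition_def nonempty_members_def by (auto intro!: partition_on_space)

lemma hp_union:
  assumes h1: "hyp_partition G1 P1" and h2: "hyp_partition G2 P2"
    and d: "\<Union>G1 \<inter> \<Union>G2 = {}" and n1: "nonempty_members G1"
  shows "hyp_partition (G1 \<union> G2) (P1 \<union> P2)"
  unfolding hyp_partition_def
proof (intro conjI)
  have p1: "partition_on G1 P1" and p2: "partition_on G2 P2"
    and q1: "partition_on (\<Union>G1) (Union ` P1)" and q2: "partition_on (\<Union>G2) (Union ` P2)"
    using h1 h2 unfolding hyp_partition_def by blast+
  have "G1 \<inter> G2 = {}" using d n1 unfolding nonempty_members_def by blast
  then show "partition_on (G1 \<union> G2) (P1 \<union> P2)"
    unfolding partition_on_def
    using disjoint_union[OF partition_onD2[OF p1] partition_onD2[OF p2]]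
      partition_onD1[OF p1] partition_onD1[OF p2] partition_onD3[OF p1] partition_onD3[OF p2]
    by auto
  show "inj_on Union (P1 \<union> P2)"
  proof (rule inj_onI)
    fix p q assume p: "p \<in> P1 \<union> P2" and q: "q \<in> P1 \<union> P2" and e: "\<Union>p = \<Union>q"
    have cross: False if "a \<in> P1" "b \<in> P2" "\<Union>a = \<Union>b" for a b
      using hp_block_subset[OF h1 that(1)] hp_block_subset[OF h2 that(2)]
        hp_block_nonempty[OF h1 that(1)] d that(3) by blast
    show "p = q"
      using p q e cross[of p q] cross[of q p] inj_onD[OF hp_carrier_inj[OF h1], of p q]
        inj_onD[OF hp_carrier_inj[OF h2], of p q] by auto
  qed
  show "partition_on (\<Union>(G1 \<union> G2)) (Union ` (P1 \<union> P2))"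
    unfolding partition_on_def image_Un
    using disjoint_union[OF partition_onD2[OF q1] partition_onD2[OF q2]]
      partition_onD1[OF q1] partition_onD1[OF q2] partition_onD3[OF q1] partition_onD3[OF q2] d
    by auto
qed

section \<open>Connectivity via separations\<close>

definition separates :: "'a set set \<Rightarrow> 'a set \<Rightarrow> 'a set \<Rightarrow> bool" where
  "separates G A B \<longleftrightarrow> A \<noteq> {} \<and> B \<noteq> {} \<and> A \<inter> B = {} \<and> A \<union> B = \<Union>G
     \<and> (\<forall>X\<in>G. X \<subseteq> A \<or> X \<subseteq> B)"

lemma separates_sym: "separates G A B \<Longrightarrow> separates G B A"
  unfolding separates_def by blast

lemma separation_restr_carrier:
  assumes sp: "separates G A B"
  shows "\<Union>(restr G A) = A"
proof
  show "\<Union>(restr G A) \<subseteq> A" by (rule restr_carrier_subset)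
  show "A \<subseteq> \<Union>(restr G A)"
  proof
    fix a assume a: "a \<in> A"
    then obtain X where X: "X \<in> G" "a \<in> X" using sp unfolding separates_def by blast
    then have "X \<subseteq> A" using sp a unfolding separates_def by blast
    then show "a \<in> \<Union>(restr G A)" using X by (auto simp: restr_iff)
  qed
qed

text \<open>A separation yields a second hypergraph partition besides the trivial one.\<close>
lemma separation_not_connected:
  assumes ne: "nonempty_members G" and sp: "separates G A B"
  shows "\<not> hconnected G"
proof
  assume c: "hconnected G"
  have rA: "\<Union>(restr G A) = A" and rB: "\<Union>(restr G B) = B"
    using separation_restr_carrier[OF sp] separation_restr_carrier[OF separates_sym[OF sp]] .
  have AB: "A \<noteq> {}" "B \<noteq> {}" "A \<inter> B = {}" "A \<union> B = \<Union>G"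
    using sp unfolding separates_def by blast+
  have AneB: "A \<noteq> B" using AB(1,3) by blast
  then have neq: "restr G A \<noteq> restr G B" using rA rB by metis
  have disj: "restr G A \<inter> restr G B = {}"
    using ne AB(3) unfolding nonempty_members_def restr_def by blast
  have cov: "restr G A \<union> restr G B = G" using sp unfolding separates_def restr_def by blast
  have "hyp_partition G {restr G A, restr G B}"
    unfolding hyp_partition_def
  proof (intro conjI)
    show "partition_on G {restr G A, restr G B}"
    proof (rule partition_onI)
      show "\<Union>{restr G A, restr G B} = G" using cov by simp
      show "{} \<notin> {restr G A, restr G B}" using rA rB AB(1,2) by auto
      show "disjnt p q" if "p \<in> {restr G A, restr G B}" "q \<in> {restr G A, restr G B}" "p \<noteq> q"
        for p q using that disj unfolding disjnt_def by auto
    qed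
    show "inj_on Union {restr G A, restr G B}" using AneB by (auto simp: inj_on_def rA rB)
    show "partition_on (\<Union>G) (Union ` {restr G A, restr G B})"
    proof (rule partition_onI)
      show "\<Union>(Union ` {restr G A, restr G B}) = \<Union>G" using rA rB AB(4) by simp
      show "{} \<notin> Union ` {restr G A, restr G B}" using rA rB AB(1,2) by auto
      show "disjnt p q" if "p \<in> Union ` {restr G A, restr G B}" "q \<in> Union ` {restr G A, restr G B}"
        "p \<noteq> q" for p q using that rA rB AB(3) unfolding disjnt_def by auto
    qed
  qed
  moreover have "hyp_partition G {G}" using hp_trivial[OF ne] AB(1,4) by blast
  moreover have "{restr G A, restr G B} \<noteq> {G}" using neq by blast
  ultimately show False using c unfolding hconnected_def by blast
qed

lemma hp_block_separation:
  assumes hp: "hyp_partition G P" and B: "B \<in> P" and B': "B' \<in> P" "B' \<noteq> B"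
  shows "separates G (\<Union>B) (\<Union>G - \<Union>B)"
  unfolding separates_def
proof (intro conjI ballI)
  show "\<Union>B \<noteq> {}" using hp_block_nonempty[OF hp B] .
  show "\<Union>G - \<Union>B \<noteq> {}"
    using hp_block_nonempty[OF hp B'(1)] hp_block_subset[OF hp B'(1)] hp_disjoint[OF hp B' (1) B B'(2)]
    by blast
  show "\<Union>B \<inter> (\<Union>G - \<Union>B) = {}" by blast
  show "\<Union>B \<union> (\<Union>G - \<Union>B) = \<Union>G" using hp_block_subset[OF hp B] by blast
  fix X assume XG: "X \<in> G"
  then obtain B'' where B'': "B'' \<in> P" "X \<in> B''" using hp_covers[OF hp] by blast
  then show "X \<subseteq> \<Union>B \<or> X \<subseteq> \<Union>G - \<Union>B"
    using hp_disjoint[OF hp B''(1) B] XG by (cases "B'' = B") blast+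
qed

lemma inseparable_hp_unique:
  assumes ns: "\<not> (\<exists>A B. separates G A B)" and hp: "hyp_partition G P" and G: "G \<noteq> {}"
  shows "P = {G}"
proof -
  have UP: "\<Union>P = G" using hp unfolding hyp_partition_def partition_on_def by blast
  then obtain B where B: "B \<in> P" using G by blast
  have "B' = B" if "B' \<in> P" for B'
    using hp_block_separation[OF hp B that] ns by blast
  then have "P = {B}" using B by blast
  then show ?thesis using UP by simp
qed

lemma connected_iff_no_separation:
  assumes ne: "nonempty_members G"
  shows "hconnected G \<longleftrightarrow> \<not> (\<exists>A B. separates G A B)"
proof
  assume "hconnected G" then show "\<not> (\<exists>A B. separates G A B)"
    using separation_not_connected[OF ne] by blast
next
  assume ns: "\<not> (\<exists>A B. separates G A B)"
  show "hconnected G"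
  proof (cases "G = {}")
    case True
    then show ?thesis unfolding hconnected_def by (metis hp_empty_iff)
  next
    case False
    then show ?thesis unfolding hconnected_def
      using hp_trivial[OF ne False] inseparable_hp_unique[OF ns _ False] by blast
  qed
qed

lemma connected_empty: "hconnected {}"
  unfolding hconnected_def by (metis hp_empty_iff)

lemma connected_on_one_side:
  assumes ne: "nonempty_members G0" and c: "hconnected G0" and sub: "G0 \<subseteq> G"
    and sp: "separates G A B"
  shows "\<Union>G0 \<subseteq> A \<or> \<Union>G0 \<subseteq> B"
proof (rule ccontr)
  assume side: "\<not> (\<Union>G0 \<subseteq> A \<or> \<Union>G0 \<subseteq> B)"
  have AB: "A \<inter> B = {}" "A \<union> B = \<Union>G" "\<forall>X\<in>G. X \<subseteq> A \<or> X \<subseteq> B"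
    using sp unfolding separates_def by blast+
  have "\<Union>G0 \<subseteq> A \<union> B" using sub AB(2) by blast
  then have "separates G0 (\<Union>G0 \<inter> A) (\<Union>G0 \<inter> B)"
    unfolding separates_def
  proof (intro conjI ballI)
    show "\<Union>G0 \<inter> A \<noteq> {}" "\<Union>G0 \<inter> B \<noteq> {}" using side \<open>\<Union>G0 \<subseteq> A \<union> B\<close> by blast+
    show "\<Union>G0 \<inter> A \<inter> (\<Union>G0 \<inter> B) = {}" using AB(1) by blast
    show "\<Union>G0 \<inter> A \<union> \<Union>G0 \<inter> B = \<Union>G0" using \<open>\<Union>G0 \<subseteq> A \<union> B\<close> by blast
    show "X \<subseteq> \<Union>G0 \<inter> A \<or> X \<subseteq> \<Union>G0 \<inter> B" if "X \<in> G0" for X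
      using that sub AB(3) by blast
  qed
  then show False using separation_not_connected[OF ne] c by blast
qed

lemma connected_mono:
  assumes ne: "nonempty_members G" and sub: "G0 \<subseteq> G" and c: "hconnected G0"
    and car: "\<Union>G0 = \<Union>G"
  shows "hconnected G"
proof -
  have "\<not> separates G A B" for A B
  proof
    assume sp: "separates G A B"
    then have "\<Union>G0 \<subseteq> A \<or> \<Union>G0 \<subseteq> B"
      using connected_on_one_side[OF nonempty_members_subset[OF ne sub] c sub] by blast
    moreover have "A \<noteq> {}" "B \<noteq> {}" "A \<inter> B = {}" "A \<union> B = \<Union>G"
      using sp unfolding separates_def by blast+
    ultimately show False using car by blast
  qed
  then show ?thesis using connected_iff_no_separation[OF ne] by blast
qed

section \<open>Finest partitions\<close>

text \<open>Finest partitions exist: split along a separation and combine the finest partitions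
  of the two sides, by induction on the size of the carrier.\<close>
lemma finest_partition_exists:
  assumes "finite (\<Union>H)" "nonempty_members H"
  shows "\<exists>P. finest_partition H P"
  using assms
proof (induction "card (\<Union>H)" arbitrary: H rule: less_induct)
  case less
  show ?case
  proof (cases "hconnected H")
    case True
    show ?thesis
    proof (cases "H = {}")
      case True
      have "finest_partition {} {}" unfolding finest_partition_def by (simp add: hp_empty_iff)
      then show ?thesis using True by blast
    next
      case False
      then show ?thesis
        unfolding finest_partition_def using hp_trivial[OF less.prems(2) False] True by blast
    qed
  next
    case False
    then obtain A B where sp: "separates H A B"
      using connected_iff_no_separation[OF less.prems(2)] by blast
    have AB: "A \<noteq> {}" "B \<noteq> {}" "A \<inter> B = {}" "A \<union> B = \<Union>H"
      using sp unfolding separates_def by blast+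
    have part: "\<exists>P. finest_partition (restr H S) P" if S: "S = A \<or> S = B" for S
    proof -
      have car: "\<Union>(restr H S) = S"
        using S separation_restr_carrier[OF sp] separation_restr_carrier[OF separates_sym[OF sp]]
        by blast
      have sub: "S \<subset> \<Union>H" using S AB by blast
      then have "card S < card (\<Union>H)" "finite S"
        using psubset_card_mono[OF less.prems(1)] finite_subset[OF psubset_imp_subset less.prems(1)]
        by blast+
      then show ?thesis
        using less.hyps[of "restr H S"] car nonempty_members_restr[OF less.prems(2)] by simp
    qed
    obtain PA PB where PA: "finest_partition (restr H A) PA" and PB: "finest_partition (restr H B) PB"
      using part[of A] part[of B] by blast
    have "\<forall>X\<in>H. X \<subseteq> A \<or> X \<subseteq> B" using sp unfolding separates_def by blast
    then have HAB: "restr H A \<union> restr H B = H" unfolding restr_def by blast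
    have disj: "\<Union>(restr H A) \<inter> \<Union>(restr H B) = {}"
      using restr_carrier_subset[of H A] restr_carrier_subset[of H B] AB(3) by blast
    have "hyp_partition (restr H A \<union> restr H B) (PA \<union> PB)"
      using PA PB hp_union[OF _ _ disj nonempty_members_restr[OF less.prems(2)]]
      unfolding finest_partition_def by blast
    then have "hyp_partition H (PA \<union> PB)" unfolding HAB .
    moreover have "\<forall>C\<in>PA \<union> PB. hconnected C" using PA PB unfolding finest_partition_def by blast
    ultimately have "finest_partition H (PA \<union> PB)" unfolding finest_partition_def by blast
    then show ?thesis by blast
  qed
qed

lemma finest_partition_card:
  assumes fin: "finite (\<Union>H)" and nc: "\<not> hconnected H" and fp: "finest_partition H P"
  shows "card P \<ge> 2"
proof -
  have hp: "hyp_partition H P" and bc: "\<forall>B\<in>P. hconnected B"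
    using fp unfolding finest_partition_def by blast+
  have UP: "\<Union>P = H" using hp unfolding hyp_partition_def partition_on_def by blast
  have "finite P" using UP fin by (metis finite_UnionD)
  moreover have "P \<noteq> {}" using UP nc connected_empty by auto
  ultimately have "card P \<noteq> 0" by simp
  moreover have "card P \<noteq> 1" using UP nc bc by (metis card_1_singletonE ccpo_Sup_singleton singletonI)
  ultimately show ?thesis by linarith
qed

lemma hp_block_smaller:
  assumes fin: "finite (\<Union>H)" and hp: "hyp_partition H P" and c2: "card P \<ge> 2"
    and B: "B \<in> P"
  shows "card (\<Union>B) < card (\<Union>H)"
proof -
  have "P \<noteq> {B}" using c2 by auto
  then obtain B' where B': "B' \<in> P" "B' \<noteq> B" using B by blast
  have "\<Union>B \<subset> \<Union>H"
    using hp_disjoint[OF hp B'(1) B B'(2)] hp_block_nonempty[OF hp B'(1)]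
      hp_block_subset[OF hp B'(1)] hp_block_subset[OF hp B] by blast
  then show ?thesis using fin psubset_card_mono by blast
qed

section \<open>Connected sets\<close>

definition connected_sets :: "'a set set \<Rightarrow> 'a set set" where
  "connected_sets H = {Y. Y \<noteq> {} \<and> hconnected (restr H Y) \<and> \<Union>(restr H Y) = Y}"

lemma connected_sets_iff:
  "Y \<in> connected_sets H \<longleftrightarrow> Y \<noteq> {} \<and> hconnected (restr H Y) \<and> \<Union>(restr H Y) = Y"
  unfolding connected_sets_def by (rule mem_Collect_eq)

lemma connected_sets_subset: "Y \<in> connected_sets H \<Longrightarrow> Y \<subseteq> \<Union>H"
  using Union_mono[OF restr_subset[of H Y]] unfolding connected_sets_iff by simp

lemma connected_sets_restr: "connected_sets (restr G Z) = {Y \<in> connected_sets G. Y \<subseteq> Z}"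
proof (rule set_eqI)
  fix Y
  show "Y \<in> connected_sets (restr G Z) \<longleftrightarrow> Y \<in> {Y \<in> connected_sets G. Y \<subseteq> Z}"
  proof (cases "Y \<subseteq> Z")
    case True
    then show ?thesis by (simp add: connected_sets_iff restr_restr)
  next
    case False
    then have "Y \<notin> connected_sets (restr G Z)"
      using connected_sets_subset[of Y "restr G Z"] restr_carrier_subset[of G Z] by blast
    then show ?thesis using False by blast
  qed
qed

lemma connected_single_edge:
  assumes "X \<noteq> {}"
  shows "hconnected {X}"
proof -
  have ne: "nonempty_members {X}" using assms unfolding nonempty_members_def by simp
  have "\<not> separates {X} A B" for A B
  proof
    assume "separates {X} A B"
    then have "A \<noteq> {}" "B \<noteq> {}" "A \<inter> B = {}" "A \<union> B = X" "X \<subseteq> A \<or> X \<subseteq> B"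
      unfolding separates_def by simp_all
    then show False by blast
  qed
  then show ?thesis using connected_iff_no_separation[OF ne] by blast
qed

lemma edge_connected_set:
  assumes ne: "nonempty_members G" and X: "X \<in> G"
  shows "X \<in> connected_sets G"
proof -
  have Xne: "X \<noteq> {}" using ne X unfolding nonempty_members_def by blast
  have XrX: "X \<in> restr G X" using X by (simp add: restr_iff)
  have car: "\<Union>(restr G X) = X" using restr_carrier_subset[of G X] XrX by blast
  have "hconnected (restr G X)"
    using connected_mono[OF nonempty_members_restr[OF ne] _ connected_single_edge[OF Xne]] XrX car
    by simp
  then show ?thesis using Xne car unfolding connected_sets_iff by blast
qed

lemma carrier_connected_sets:
  assumes ne: "nonempty_members H"
  shows "\<Union>(connected_sets H) = \<Union>H"
proof
  show "\<Union>(connected_sets H) \<subseteq> \<Union>H" using connected_sets_subset by blast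
  have "H \<subseteq> connected_sets H" using edge_connected_set[OF ne] by blast
  then show "\<Union>H \<subseteq> \<Union>(connected_sets H)" by (rule Union_mono)
qed

lemma connected_iff_carrier_connected:
  assumes "\<Union>G \<noteq> {}"
  shows "hconnected G \<longleftrightarrow> \<Union>G \<in> connected_sets G"
  using assms unfolding connected_sets_iff restr_whole_carrier by blast

lemma connected_by_connected_sets:
  assumes neH: "nonempty_members H" and neJ: "nonempty_members J"
    and same: "connected_sets J = connected_sets H"
  shows "hconnected J \<longleftrightarrow> hconnected H"
proof -
  have car: "\<Union>J = \<Union>H" using carrier_connected_sets[OF neH] carrier_connected_sets[OF neJ] same by simp
  show ?thesis
  proof (cases "\<Union>H = {}")
    case True
    then show ?thesis using car empty_carrier[OF neH] empty_carrier[OF neJ] by simp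
  next
    case False
    then show ?thesis
      using connected_iff_carrier_connected[of J] connected_iff_carrier_connected[of H] car same
      by simp
  qed
qed

lemma connected_set_in_block:
  assumes ne: "nonempty_members G" and hp: "hyp_partition G P" and Y: "Y \<in> connected_sets G"
  shows "\<exists>B\<in>P. Y \<subseteq> \<Union>B"
proof -
  have Y1: "Y \<noteq> {}" "hconnected (restr G Y)" "\<Union>(restr G Y) = Y"
    using Y unfolding connected_sets_iff by simp_all
  obtain y where y: "y \<in> Y" using Y1(1) by blast
  have "y \<in> \<Union>G" using y connected_sets_subset[OF Y] by blast
  then obtain B0 where B0: "B0 \<in> P" "y \<in> \<Union>B0" unfolding hp_carrier[OF hp] by blast
  show ?thesis
  proof (cases "\<exists>B'\<in>P. B' \<noteq> B0")
    case True
    then obtain B' where "B' \<in> P" "B' \<noteq> B0" by blast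
    then have "separates G (\<Union>B0) (\<Union>G - \<Union>B0)" using hp_block_separation[OF hp B0(1)] by blast
    then have "\<Union>(restr G Y) \<subseteq> \<Union>B0 \<or> \<Union>(restr G Y) \<subseteq> \<Union>G - \<Union>B0"
      using connected_on_one_side[OF nonempty_members_restr[OF ne] Y1(2) restr_subset] by blast
    then have "Y \<subseteq> \<Union>B0 \<or> Y \<subseteq> \<Union>G - \<Union>B0" unfolding Y1(3) .
    then show ?thesis using B0 y by blast
  next
    case False
    then have "P = {B0}" using B0(1) by blast
    then have "\<Union>G = \<Union>B0" using hp_carrier[OF hp] by simp
    then have "Y \<subseteq> \<Union>B0" using connected_sets_subset[OF Y] by simp
    then show ?thesis using B0(1) by blast
  qed
qed

lemma finest_block_connected_set:
  assumes ne: "nonempty_members H" and fp: "finest_partition H P" and B: "B \<in> P"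
  shows "\<Union>B \<in> connected_sets H" and "restr H (\<Union>B) = B"
proof -
  have hp: "hyp_partition H P" using fp unfolding finest_partition_def by blast
  show BH: "restr H (\<Union>B) = B" using hp_block_restr[OF ne hp B] .
  show "\<Union>B \<in> connected_sets H"
    using hp_block_nonempty[OF hp B] BH fp B unfolding connected_sets_iff finest_partition_def by simp
qed

section \<open>Enhancement and cognation\<close>

lemma connected_insert:
  assumes ne: "nonempty_members G" and Y: "Y \<noteq> {}"
    and G0: "G0 \<subseteq> G" "hconnected G0" "\<Union>G0 = Y"
  shows "hconnected (insert Y G) \<longleftrightarrow> hconnected G"
proof -
  have car: "\<Union>(insert Y G) = \<Union>G" using Union_mono[OF G0(1)] G0(3) by auto
  have neY: "nonempty_members (insert Y G)" using ne Y unfolding nonempty_members_def by blast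
  have "hconnected G" if c: "hconnected (insert Y G)"
  proof (rule ccontr)
    assume "\<not> hconnected G"
    then obtain A B where sp: "separates G A B" using connected_iff_no_separation[OF ne] by blast
    then have "\<Union>G0 \<subseteq> A \<or> \<Union>G0 \<subseteq> B"
      using connected_on_one_side[OF nonempty_members_subset[OF ne G0(1)] G0(2,1)] by blast
    then have "Y \<subseteq> A \<or> Y \<subseteq> B" by (simp only: G0(3))
    then have "separates (insert Y G) A B" using sp car unfolding separates_def by auto
    then show False using separation_not_connected[OF neY] c by blast
  qed
  moreover have "hconnected (insert Y G)" if "hconnected G"
    using connected_mono[OF neY subset_insertI that car[symmetric]] .
  ultimately show ?thesis by blast
qed

text \<open>Enhancing a hypergraph leaves its connected sets unchanged: a set Z containing the new
  edge Y also contains the connected hypergraph witnessing that Y is dispensable.\<close>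
lemma enhance_connected_sets:
  assumes e: "enhances H' H" and ne: "nonempty_members H"
  shows "connected_sets H' = connected_sets H"
proof (rule set_eqI)
  fix Z
  obtain Y where Y: "Y \<noteq> {}" "dispensable H Y" "H' = insert Y H"
    using e unfolding enhances_def by auto
  define G0 where "G0 = restr H Y - {Y}"
  have G0: "hconnected G0" "\<Union>G0 = Y" using Y(2) unfolding dispensable_def G0_def by simp_all
  show "Z \<in> connected_sets H' \<longleftrightarrow> Z \<in> connected_sets H"
  proof (cases "Y \<subseteq> Z")
    case False
    then have "restr H' Z = restr H Z" unfolding Y(3) restr_def by auto
    then show ?thesis unfolding connected_sets_iff by simp
  next
    case True
    then have r: "restr H' Z = insert Y (restr H Z)" unfolding Y(3) restr_def by auto
    have G0Z: "G0 \<subseteq> restr H Z" using True unfolding G0_def restr_def by auto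
    have "hconnected (insert Y (restr H Z)) \<longleftrightarrow> hconnected (restr H Z)"
      using connected_insert[OF nonempty_members_restr[OF ne] Y(1) G0Z G0] .
    moreover have "\<Union>(insert Y (restr H Z)) = \<Union>(restr H Z)" using Union_mono[OF G0Z] G0(2) by auto
    ultimately show ?thesis unfolding connected_sets_iff r by simp
  qed
qed

lemma enhance_nonempty_members:
  assumes "enhances H' H"
  shows "nonempty_members H' \<longleftrightarrow> nonempty_members H"
  using assms unfolding enhances_def nonempty_members_def by auto

lemma cognate_connected_sets:
  assumes "equivclp enhances H J" and "nonempty_members H"
  shows "connected_sets J = connected_sets H"
proof -
  have "nonempty_members J \<and> connected_sets J = connected_sets H"
    using assms
  proof (induction rule: equivclp_induct)
    case base
    then show ?case by simp
  next
    case (step y z)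
    then have ney: "nonempty_members y" and sy: "connected_sets y = connected_sets H" by blast+
    consider "enhances y z" | "enhances z y" using step.hyps(2) by (blast elim: symclpE)
    then show ?case
    proof cases
      case 1
      then show ?thesis using enhance_nonempty_members enhance_connected_sets[OF 1] ney sy by blast
    next
      case 2
      then show ?thesis using enhance_nonempty_members enhance_connected_sets[OF 2] ney sy by metis
    qed
  qed
  then show ?thesis by blast
qed

lemma connected_set_dispensable:
  assumes ne: "nonempty_members G" and HG: "H \<subseteq> G"
    and Y: "Y \<in> connected_sets H" and YG: "Y \<notin> G"
  shows "dispensable G Y"
proof -
  have Y1: "hconnected (restr H Y)" "\<Union>(restr H Y) = Y" using Y unfolding connected_sets_iff by simp_all
  have sub: "restr H Y \<subseteq> restr G Y - {Y}" using HG YG unfolding restr_def by auto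
  have car: "\<Union>(restr G Y - {Y}) = Y"
    using Union_mono[OF sub] restr_carrier_subset[of G Y] Y1(2) by auto
  have "nonempty_members (restr G Y - {Y})"
    using nonempty_members_restr[OF ne] nonempty_members_subset by blast
  then have "hconnected (restr G Y - {Y})"
    using connected_mono[OF _ sub Y1(1)] car Y1(2) by simp
  moreover have "Y \<subseteq> \<Union>G" using connected_sets_subset[OF Y] Union_mono[OF HG] by blast
  ultimately show ?thesis unfolding dispensable_def using car by blast
qed

text \<open>Fact (2): a finite hypergraph is cognate to the family of its connected sets, reached by
  adding the missing connected sets one at a time.\<close>
lemma cognate_to_connected_sets:
  assumes fin: "finite (\<Union>H)" and ne: "nonempty_members H"
  shows "equivclp enhances H (connected_sets H)"
proof -
  have neS: "nonempty_members (connected_sets H)"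
    unfolding nonempty_members_def by (simp add: connected_sets_iff)
  have HS: "H \<subseteq> connected_sets H" using edge_connected_set[OF ne] by blast
  have add: "equivclp enhances H (H \<union> F)" if "finite F" "F \<subseteq> connected_sets H" for F
    using that
  proof (induction F rule: finite_induct)
    case empty
    then show ?case by simp
  next
    case (insert Y F)
    define G where "G = H \<union> F"
    have IH: "equivclp enhances H G" using insert unfolding G_def by blast
    have Y: "Y \<in> connected_sets H" using insert.prems by blast
    have HYF: "H \<union> insert Y F = G \<union> {Y}" unfolding G_def by blast
    show ?case
    proof (cases "Y \<in> G")
      case True
      then have "G \<union> {Y} = G" by blast
      then show ?thesis using IH HYF by simp
    next
      case False
      have "G \<subseteq> connected_sets H" using HS insert.prems unfolding G_def by blast
      then have "dispensable G Y"
        using connected_set_dispensable[OF nonempty_members_subset[OF neS] _ Y False]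
        unfolding G_def by blast
      moreover have "Y \<noteq> {}" using Y unfolding connected_sets_iff by blast
      ultimately have "enhances (G \<union> {Y}) G" unfolding enhances_def using False by blast
      then have "equivclp enhances G (G \<union> {Y})" by (meson equivclp_sym r_into_equivclp)
      then show ?thesis using equivclp_trans[OF IH] HYF by simp
    qed
  qed
  have "connected_sets H \<subseteq> Pow (\<Union>H)" using connected_sets_subset by blast
  then have "finite (connected_sets H)" using fin finite_subset by blast
  then show ?thesis using add[of "connected_sets H"] HS by (simp add: Un_absorb1)
qed

section \<open>Constructions\<close>

lemma remove_point_smaller:
  assumes fin: "finite (\<Union>H)" and x: "x \<in> \<Union>H"
  shows "card (\<Union>(restr H (\<Union>H - {x}))) < card (\<Union>H)" and "finite (\<Union>(restr H (\<Union>H - {x})))"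
proof -
  have sub: "\<Union>(restr H (\<Union>H - {x})) \<subset> \<Union>H" using restr_carrier_subset[of H "\<Union>H - {x}"] x by blast
  show "card (\<Union>(restr H (\<Union>H - {x}))) < card (\<Union>H)" using psubset_card_mono[OF fin sub] .
  show "finite (\<Union>(restr H (\<Union>H - {x})))" using finite_subset[OF psubset_imp_subset[OF sub] fin] .
qed

lemma finest_block_smaller:
  assumes fin: "finite (\<Union>H)" and ne: "nonempty_members H" and nc: "\<not> hconnected H"
    and fp: "finest_partition H P" and B: "B \<in> P"
  shows "card (\<Union>B) < card (\<Union>H)" "finite (\<Union>B)" "nonempty_members B"
proof -
  have hp: "hyp_partition H P" using fp unfolding finest_partition_def by blast
  show "card (\<Union>B) < card (\<Union>H)" using hp_block_smaller[OF fin hp finest_partition_card[OF fin nc fp] B] .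
  show "finite (\<Union>B)" using finite_subset[OF Union_mono[OF hp_block_subset[OF hp B]] fin] .
  show "nonempty_members B" using nonempty_members_subset[OF ne hp_block_subset[OF hp B]] .
qed

lemma construction_connected_sets:
  assumes "is_construction H K" and "nonempty_members H"
  shows "K \<subseteq> connected_sets H"
  using assms
proof (induction rule: is_construction.induct)
  case empty
  then show ?case by simp
next
  case (conn H x K)
  have "K \<subseteq> connected_sets (restr H (\<Union>H - {x}))"
    using conn.IH nonempty_members_restr[OF conn.prems] by blast
  then have "K \<subseteq> connected_sets H" by (auto simp: connected_sets_restr)
  moreover have "\<Union>H \<in> connected_sets H"
    using connected_iff_carrier_connected[OF conn.hyps(1)] conn.hyps(2) by blast
  ultimately show ?case by blast
next
  case (disconn H P K)
  have "K B \<subseteq> connected_sets H" if B: "B \<in> P" for B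
  proof -
    have BH: "restr H (\<Union>B) = B"
      using finest_block_connected_set(2)[OF disconn.prems disconn.hyps(2) B] .
    have "K B \<subseteq> connected_sets B"
      using disconn.IH B nonempty_members_restr[OF disconn.prems, of "\<Union>B"] BH by auto
    also have "connected_sets B \<subseteq> connected_sets H"
      using connected_sets_restr[of H "\<Union>B"] BH by auto
    finally show ?thesis .
  qed
  then show ?case by blast
qed

lemma construction_exists:
  assumes "finite (\<Union>H)" and "nonempty_members H"
  shows "\<exists>K. is_construction H K"
  using assms
proof (induction "card (\<Union>H)" arbitrary: H rule: less_induct)
  case less
  consider (empty) "\<Union>H = {}" | (conn) x where "x \<in> \<Union>H" "hconnected H" | (disconn) "\<not> hconnected H"
    by blast
  then show ?case
  proof cases
    case empty
    then have "H = {}" using empty_carrier[OF less.prems(2)] by blast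
    then show ?thesis using is_construction.empty by auto
  next
    case conn
    obtain K where "is_construction (restr H (\<Union>H - {x})) K"
      using less.hyps[OF remove_point_smaller[OF less.prems(1) conn(1)]
          nonempty_members_restr[OF less.prems(2)]] by blast
    then show ?thesis using is_construction.conn[OF _ conn(2,1)] conn(1) by blast
  next
    case disconn
    obtain P where fp: "finest_partition H P" using finest_partition_exists less.prems by blast
    have "\<forall>B\<in>P. \<exists>K. is_construction B K"
      using less.hyps[OF finest_block_smaller[OF less.prems disconn fp]] by blast
    from bchoice[OF this] obtain Kc where "\<forall>B\<in>P. is_construction B (Kc B)" ..
    then show ?thesis
      using is_construction.disconn[OF disconn fp finest_partition_card[OF less.prems(1) disconn fp]]
      by blast
  qed
qed

text \<open>For connected H, a proper
  connected set avoids some point x and is handled in H restricted to the carrier minus x; for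
  disconnected H, it lies in one block, whose construction is combined with arbitrary
  constructions of the other blocks.\<close>
lemma connected_set_in_construction:
  assumes "finite (\<Union>H)" and "nonempty_members H" and "Y \<in> connected_sets H"
  shows "\<exists>K. is_construction H K \<and> Y \<in> K"
  using assms
proof (induction "card (\<Union>H)" arbitrary: H rule: less_induct)
  case less
  note fin = less.prems(1) and ne = less.prems(2) and Y = less.prems(3)
  have YH: "Y \<subseteq> \<Union>H" "Y \<noteq> {}" using connected_sets_subset[OF Y] Y by (simp_all add: connected_sets_iff)
  show ?case
  proof (cases "hconnected H")
    case conn: True
    have step: "is_construction H (K \<union> {\<Union>H})"
      if "x \<in> \<Union>H" "is_construction (restr H (\<Union>H - {x})) K" for x K
      using is_construction.conn[OF _ conn that] that(1) by blast
    show ?thesis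
    proof (cases "Y = \<Union>H")
      case True
      obtain x where x: "x \<in> \<Union>H" using YH by blast
      obtain K where "is_construction (restr H (\<Union>H - {x})) K"
        using construction_exists remove_point_smaller[OF fin x] nonempty_members_restr[OF ne] by blast
      then show ?thesis using step[OF x] True by blast
    next
      case False
      then obtain x where x: "x \<in> \<Union>H" "x \<notin> Y" using YH(1) by blast
      then have "Y \<in> connected_sets (restr H (\<Union>H - {x}))"
        using Y YH(1) by (auto simp: connected_sets_restr)
      then obtain K where "is_construction (restr H (\<Union>H - {x})) K" "Y \<in> K"
        using less.hyps[OF remove_point_smaller[OF fin x(1)] nonempty_members_restr[OF ne]] by blast
      then show ?thesis using step[OF x(1)] by blast
    qed
  next
    case disconn: False
    obtain P where fp: "finest_partition H P" using finest_partition_exists fin ne by blast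
    have hp: "hyp_partition H P" using fp unfolding finest_partition_def by blast
    note block = finest_block_smaller[OF fin ne disconn fp]
    obtain B0 where B0: "B0 \<in> P" "Y \<subseteq> \<Union>B0" using connected_set_in_block[OF ne hp Y] by blast
    have "Y \<in> connected_sets B0"
      using Y B0 connected_sets_restr[of H "\<Union>B0"] finest_block_connected_set(2)[OF ne fp B0(1)] by simp
    then obtain KY where KY: "is_construction B0 KY" "Y \<in> KY"
      using less.hyps[OF block[OF B0(1)]] by blast
    have "\<forall>B\<in>P. \<exists>K. is_construction B K" using construction_exists block(2,3) by blast
    from bchoice[OF this] obtain Kc where Kc: "\<forall>B\<in>P. is_construction B (Kc B)" ..
    define K where "K = Kc(B0 := KY)"
    have "\<forall>B\<in>P. is_construction B (K B)" using Kc KY(1) unfolding K_def by simp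
    then have "is_construction H (\<Union>B\<in>P. K B)"
      using is_construction.disconn[OF disconn fp finest_partition_card[OF fin disconn fp]] by blast
    moreover have "Y \<in> (\<Union>B\<in>P. K B)" using B0(1) KY(2) unfolding K_def by force
    ultimately show ?thesis by blast
  qed
qed

lemma union_constructions:
  assumes "finite (\<Union>H)" and "nonempty_members H"
  shows "\<Union>(constructions H) = connected_sets H"
proof
  show "\<Union>(constructions H) \<subseteq> connected_sets H"
    using construction_connected_sets assms(2) unfolding constructions_def by blast
  show "connected_sets H \<subseteq> \<Union>(constructions H)"
    using connected_set_in_construction[OF assms] unfolding constructions_def by blast
qed

lemma finest_partition_transfer:
  assumes neH: "nonempty_members H" and neJ: "nonempty_members J"
    and same: "connected_sets J = connected_sets H" and fp: "finest_partition H P"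
  shows "finest_partition J ((\<lambda>B. restr J (\<Union>B)) ` P)"
    and "inj_on (\<lambda>B. restr J (\<Union>B)) P"
    and "\<And>B. B \<in> P \<Longrightarrow> \<Union>(restr J (\<Union>B)) = \<Union>B"
proof -
  let ?f = "\<lambda>B. restr J (\<Union>B)"
  have hp: "hyp_partition H P" using fp unfolding finest_partition_def by blast
  have blockJ: "hconnected (?f B) \<and> \<Union>(?f B) = \<Union>B" if "B \<in> P" for B
  proof -
    have "\<Union>B \<in> connected_sets J" using finest_block_connected_set(1)[OF neH fp that] same by simp
    then show ?thesis by (simp add: connected_sets_iff)
  qed
  then show fcar: "\<And>B. B \<in> P \<Longrightarrow> \<Union>(?f B) = \<Union>B" by blast
  have carrier_eq: "B1 = B2" if "B1 \<in> P" "B2 \<in> P" "\<Union>(?f B1) = \<Union>(?f B2)" for B1 B2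
    using inj_onD[OF hp_carrier_inj[OF hp]] that fcar by simp
  show "inj_on ?f P" by (rule inj_onI) (simp add: carrier_eq)
  have car: "\<Union>J = \<Union>H" using carrier_connected_sets[OF neH] carrier_connected_sets[OF neJ] same by simp
  have img: "Union ` (?f ` P) = Union ` P" unfolding image_image by (rule image_cong) (simp_all add: fcar)
  have cover: "J \<subseteq> \<Union>(?f ` P)"
  proof
    fix X assume XJ: "X \<in> J"
    then have "X \<in> connected_sets H" using edge_connected_set[OF neJ] same by blast
    then obtain B where B: "B \<in> P" "X \<subseteq> \<Union>B" using connected_set_in_block[OF neH hp] by blast
    then have "X \<in> ?f B" using XJ by (simp add: restr_iff)
    then show "X \<in> \<Union>(?f ` P)" using B(1) by blast
  qed
  have disj: "?f B1 \<inter> ?f B2 = {}" if "B1 \<in> P" "B2 \<in> P" "B1 \<noteq> B2" for B1 B2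
    using hp_disjoint[OF hp that] neJ unfolding restr_def nonempty_members_def by blast
  have "partition_on J (?f ` P)"
  proof (rule partition_onI)
    show "\<Union>(?f ` P) = J" using cover unfolding restr_def by blast
    show "{} \<notin> ?f ` P" using fcar hp_block_nonempty[OF hp] by fastforce
    show "disjnt p q" if "p \<in> ?f ` P" "q \<in> ?f ` P" "p \<noteq> q" for p q
      using that disj unfolding disjnt_def by blast
  qed
  moreover have "inj_on Union (?f ` P)"
  proof (rule inj_onI)
    fix p q assume "p \<in> ?f ` P" "q \<in> ?f ` P" "\<Union>p = \<Union>q"
    then show "p = q" using carrier_eq by blast
  qed
  moreover have "partition_on (\<Union>J) (Union ` (?f ` P))"
    unfolding img car using hp unfolding hyp_partition_def by blast
  ultimately show "finest_partition J (?f ` P)"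
    using blockJ unfolding finest_partition_def hyp_partition_def by blast
qed

lemma construction_transfer:
  assumes "is_construction H K" and "nonempty_members H" and "nonempty_members J"
    and "connected_sets J = connected_sets H"
  shows "is_construction J K"
  using assms
proof (induction arbitrary: J rule: is_construction.induct)
  case empty
  have "connected_sets {} = {}" unfolding connected_sets_def restr_def by auto
  then have "connected_sets J = {}" using empty.prems(3) by simp
  then have "\<Union>J = {}" using carrier_connected_sets[OF empty.prems(2)] by simp
  then have "J = {}" using empty_carrier[OF empty.prems(2)] by blast
  then show ?case using is_construction.empty by simp
next
  case (conn H x K)
  have car: "\<Union>J = \<Union>H"
    using carrier_connected_sets[OF conn.prems(1)] carrier_connected_sets[OF conn.prems(2)] conn.prems(3)
    by simp
  have "hconnected J" using connected_by_connected_sets[OF conn.prems] conn.hyps(2) by blast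
  moreover have "connected_sets (restr J (\<Union>H - {x})) = connected_sets (restr H (\<Union>H - {x}))"
    by (simp add: connected_sets_restr conn.prems(3))
  then have "is_construction (restr J (\<Union>H - {x})) K"
    using conn.IH nonempty_members_restr[OF conn.prems(1)] nonempty_members_restr[OF conn.prems(2)]
    by blast
  ultimately show ?case using is_construction.conn[of J x K] conn.hyps(1,3) car by simp
next
  case (disconn H P K)
  note transfer = finest_partition_transfer[OF disconn.prems disconn.hyps(2)]
  have BH: "restr H (\<Union>B) = B" if "B \<in> P" for B
    using finest_block_connected_set(2)[OF disconn.prems(1) disconn.hyps(2) that] .
  have block: "is_construction (restr J (\<Union>B)) (K B)" if B: "B \<in> P" for B
  proof -
    have "connected_sets (restr J (\<Union>B)) = connected_sets (restr H (\<Union>B))"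
      by (simp add: connected_sets_restr disconn.prems(3))
    then have "connected_sets (restr J (\<Union>B)) = connected_sets B" using BH[OF B] by simp
    moreover have "nonempty_members B"
      using nonempty_members_restr[OF disconn.prems(1), of "\<Union>B"] BH[OF B] by simp
    ultimately show ?thesis
      using disconn.IH B nonempty_members_restr[OF disconn.prems(2)] by blast
  qed
  have cons: "\<forall>B'\<in>(\<lambda>B. restr J (\<Union>B)) ` P. is_construction B' (K (restr H (\<Union>B')))"
  proof
    fix B' assume "B' \<in> (\<lambda>B. restr J (\<Union>B)) ` P"
    then obtain B where "B \<in> P" "B' = restr J (\<Union>B)" by blast
    then show "is_construction B' (K (restr H (\<Union>B')))" using block transfer(3) BH by simp
  qed
  have "card ((\<lambda>B. restr J (\<Union>B)) ` P) \<ge> 2"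
    using card_image[OF transfer(2)] disconn.hyps(3) by simp
  moreover have "\<not> hconnected J"
    using connected_by_connected_sets[OF disconn.prems] disconn.hyps(1) by blast
  ultimately have "is_construction J (\<Union>B'\<in>(\<lambda>B. restr J (\<Union>B)) ` P. K (restr H (\<Union>B')))"
    using is_construction.disconn[OF _ transfer(1) _ cons] by blast
  moreover have "(\<Union>B'\<in>(\<lambda>B. restr J (\<Union>B)) ` P. K (restr H (\<Union>B'))) = (\<Union>B\<in>P. K B)"
    by (auto simp: transfer(3) BH)
  ultimately show ?case by simp
qed

theorem proposition4p9:
  fixes H J :: "'a set set"
  assumes "hypergraph H" and "hypergraph J"
    and "atomic H" and "atomic J"
    and "\<Union>H = \<Union>J"
  shows "cognate H J \<longleftrightarrow> constructions H = constructions J"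
proof -
  have finH: "finite (\<Union>H)" and neH: "nonempty_members H"
    and finJ: "finite (\<Union>J)" and neJ: "nonempty_members J"
    using assms(1,2) unfolding hypergraph_def nonempty_members_def by blast+
  show ?thesis
  proof
    assume "cognate H J"
    then have same: "connected_sets J = connected_sets H"
      using cognate_connected_sets neH unfolding cognate_def by blast
    have "is_construction H K \<longleftrightarrow> is_construction J K" for K
      using construction_transfer[OF _ neH neJ same] construction_transfer[OF _ neJ neH same[symmetric]]
      by blast
    then show "constructions H = constructions J" unfolding constructions_def by (simp add: set_eq_iff)
  next
    assume "constructions H = constructions J"
    then have "connected_sets H = connected_sets J"
      using union_constructions[OF finH neH] union_constructions[OF finJ neJ] by simp
    then show "cognate H J"
      using cognate_to_connected_sets[OF finH neH] cognate_to_connected_sets[OF finJ neJ]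
      unfolding cognate_def by (metis equivclp_sym equivclp_trans)
  qed
qed

end
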